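(* Assume the stationary generator setting described in the context, and let $k\ge1$. Then: (i) $H(R_0\mid R_k,\overleftrightarrow Y)=H(R_k\mid R_0,\overleftrightarrow Y)$; (ii) $I(R_0;R_k;Y_{1:k}\mid\overleftarrow Y)+I(R_0;Y_{1:k}\mid\overleftarrow Y,R_k)+I(R_0;\overrightarrow Y\mid\overleftarrow Y,Y_{1:k},R_k)=I(R_k;\overrightarrow Y\mid R_0,\overleftarrow Y,Y_{1:k})$; (iii) $I(\overleftarrow Y;R_0\mid R_k,\overrightarrow Y)+I(\overleftarrow Y;R_0;Y_{1:k}\mid R_k)=I(R_0;R_k;Y_{1:k}\mid\overleftarrow Y)+I(R_k;Y_{1:k}\mid R_0,\overleftarrow Y)$.
   Context: Stationary generator setting: $\mathcal Y$ and $\mathcal R$ finite sets; $(Y_t,R_t)_{t\in\mathbb Z}$ jointly stationary (shift-invariant) with $Y_t\in\mathcal Y$, $R_t\in\mathcal R$ (memory after $Y_t$ is produced). Generator condition: for every $t$, $\big((Y_s)_{s\le t},(R_s)_{s<t}\big)$ is conditionally independent of $\big((Y_s)_{s>t},(R_s)_{s>t}\big)$ given $R_t$. Notation: $Y_{a:b}=(Y_a,\dots,Y_b)$, $\overleftarrow Y=(\dots,Y_{-1},Y_0)$, $\overrightarrow Y=(Y_1,Y_2,\dots)$, $\overleftrightarrow Y=(Y_t)_{t\in\mathbb Z}$; information quantities involving infinite sequences are limits of finite-window quantities. Conditional three-way mutual information: $I(A;B;C\mid D):=I(A;B\mid D)-I(A;B\mid C,D)$. *)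

theory Defs
  imports "HOL-Probability.Probability"
begin

definition pr :: "'a measure \<Rightarrow> ('a \<Rightarrow> 'b) \<Rightarrow> 'b \<Rightarrow> real" where
  "pr M X x = measure M {\<omega> \<in> space M. X \<omega> = x}"

definition cond_entropy :: "'a measure \<Rightarrow> ('a \<Rightarrow> 'b) \<Rightarrow> ('a \<Rightarrow> 'c) \<Rightarrow> real" where
  "cond_entropy M X Z =
     - (\<Sum>(x, z) \<in> (\<lambda>\<omega>. (X \<omega>, Z \<omega>)) ` space M.
          pr M (\<lambda>\<omega>. (X \<omega>, Z \<omega>)) (x, z) *
          log 2 (pr M (\<lambda>\<omega>. (X \<omega>, Z \<omega>)) (x, z) / pr M Z z))"

definition cond_mutual_info ::
  "'a measure \<Rightarrow> ('a \<Rightarrow> 'b) \<Rightarrow> ('a \<Rightarrow> 'c) \<Rightarrow> ('a \<Rightarrow> 'd) \<Rightarrow> real" where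
  "cond_mutual_info M X Y Z =
     (\<Sum>(x, y, z) \<in> (\<lambda>\<omega>. (X \<omega>, Y \<omega>, Z \<omega>)) ` space M.
        pr M (\<lambda>\<omega>. (X \<omega>, Y \<omega>, Z \<omega>)) (x, y, z) *
        log 2 (pr M (\<lambda>\<omega>. (X \<omega>, Y \<omega>, Z \<omega>)) (x, y, z) * pr M Z z /
               (pr M (\<lambda>\<omega>. (X \<omega>, Z \<omega>)) (x, z) * pr M (\<lambda>\<omega>. (Y \<omega>, Z \<omega>)) (y, z))))"

definition cond_mutual_info3 ::
  "'a measure \<Rightarrow> ('a \<Rightarrow> 'b) \<Rightarrow> ('a \<Rightarrow> 'c) \<Rightarrow> ('a \<Rightarrow> 'd) \<Rightarrow> ('a \<Rightarrow> 'e) \<Rightarrow> real" where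
  "cond_mutual_info3 M A B C D =
     cond_mutual_info M A B D - cond_mutual_info M A B (\<lambda>\<omega>. (C \<omega>, D \<omega>))"

definition window :: "(int \<Rightarrow> 'a \<Rightarrow> 'y) \<Rightarrow> int \<Rightarrow> int \<Rightarrow> 'a \<Rightarrow> 'y list" where
  "window Y a b = (\<lambda>\<omega>. map (\<lambda>i. Y i \<omega>) [a..b])"

definition jointly_stationary ::
  "'a measure \<Rightarrow> (int \<Rightarrow> 'a \<Rightarrow> 'y) \<Rightarrow> (int \<Rightarrow> 'a \<Rightarrow> 'r) \<Rightarrow> bool" where
  "jointly_stationary M Y R \<longleftrightarrow>
     distr M (Pi\<^sub>M UNIV (\<lambda>_::int. count_space UNIV)) (\<lambda>\<omega> t. (Y t \<omega>, R t \<omega>)) =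
     distr M (Pi\<^sub>M UNIV (\<lambda>_::int. count_space UNIV)) (\<lambda>\<omega> t. (Y (t + 1) \<omega>, R (t + 1) \<omega>))"

text \<open>Generator condition: for every t, the past ((Y_s)_{s<=t}, (R_s)_{s<t}) is
  conditionally independent of the future ((Y_s)_{s>t}, (R_s)_{s>t}) given the
  (discrete) memory R_t.\<close>
definition generator_condition ::
  "'a measure \<Rightarrow> (int \<Rightarrow> 'a \<Rightarrow> 'y) \<Rightarrow> (int \<Rightarrow> 'a \<Rightarrow> 'r) \<Rightarrow> bool" where
  "generator_condition M Y R \<longleftrightarrow>
     (\<forall>t::int. \<forall>A \<in> sets (Pi\<^sub>M UNIV (\<lambda>_::nat. count_space UNIV)).
        \<forall>B \<in> sets (Pi\<^sub>M UNIV (\<lambda>_::nat. count_space UNIV)). \<forall>r.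
       let past = (\<lambda>\<omega> s::nat. (Y (t - int s) \<omega>, R (t - 1 - int s) \<omega>));
           fut  = (\<lambda>\<omega> s::nat. (Y (t + 1 + int s) \<omega>, R (t + 1 + int s) \<omega>))
       in measure M {\<omega> \<in> space M. past \<omega> \<in> A \<and> fut \<omega> \<in> B \<and> R t \<omega> = r} *
          measure M {\<omega> \<in> space M. R t \<omega> = r} =
          measure M {\<omega> \<in> space M. past \<omega> \<in> A \<and> R t \<omega> = r} *
          measure M {\<omega> \<in> space M. fut \<omega> \<in> B \<and> R t \<omega> = r})"

end

theory Submission
  imports Defs
begin

text \<open>Every quantity in the theorem is a signed sum of entropies \<open>H(S)\<close> of finite sets \<open>S\<close> of
  coordinates \<open>Y\<^sub>t\<close>, \<open>R\<^sub>t\<close>. For a fixed window length \<open>n \<ge> k\<close>, (ii) is a chain-rule identity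
  up to the error \<open>[H(R\<^sub>0|Y\<^sub>-\<^sub>n\<^sub>:\<^sub>0) - H(R\<^sub>0|Y\<^sub>-\<^sub>n\<^sub>:\<^sub>n)] - [H(R\<^sub>k|Y\<^sub>-\<^sub>n\<^sub>:\<^sub>k) - H(R\<^sub>k|Y\<^sub>-\<^sub>n\<^sub>:\<^sub>n)]\<close>, and (iii)
  holds up to the error \<open>H(R\<^sub>0|Y\<^sub>-\<^sub>n\<^sub>:\<^sub>0) - H(R\<^sub>k|Y\<^sub>-\<^sub>n\<^sub>:\<^sub>k)\<close> once the generator condition is
  used in the form \<open>I(R\<^sub>0,Y\<^sub>-\<^sub>n\<^sub>:\<^sub>k ; Y\<^sub>k\<^sub>+\<^sub>1\<^sub>:\<^sub>n | R\<^sub>k) = 0\<close> and \<open>I(Y\<^sub>-\<^sub>n\<^sub>:\<^sub>0 ; R\<^sub>k,Y\<^sub>1\<^sub>:\<^sub>k | R\<^sub>0) = 0\<close>.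
  The conditional entropies \<open>H(R\<^sub>0|Y\<^sub>-\<^sub>n\<^sub>:\<^sub>0)\<close> and \<open>H(R\<^sub>0|Y\<^sub>-\<^sub>n\<^sub>:\<^sub>n)\<close> decrease in \<open>n\<close>, hence
  converge, and by stationarity the same limits are reached at time \<open>k\<close> (for the two-sided
  window by a sandwich argument), so both errors vanish in the limit. Part (i) is the two-sided
  case itself, because \<open>H(R\<^sub>0|R\<^sub>k,Y) - H(R\<^sub>k|R\<^sub>0,Y) = H(R\<^sub>0|Y) - H(R\<^sub>k|Y)\<close>.\<close>

definition shannon_entropy :: "'a measure \<Rightarrow> ('a \<Rightarrow> 'b) \<Rightarrow> real" where
  "shannon_entropy M X = - (\<Sum>x\<in>X ` space M. pr M X x * log 2 (pr M X x))"

lemma pr_eq_measure_vimage: "pr M X x = measure M (X -` {x} \<inter> space M)"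
  unfolding pr_def by (rule arg_cong[where f="measure M"]) auto

lemma shannon_entropy_cong_bij:
  assumes "\<forall>\<omega>\<in>space M. X \<omega> = f (Z \<omega>)" "\<forall>\<omega>\<in>space M. Z \<omega> = g (X \<omega>)"
  shows "shannon_entropy M X = shannon_entropy M Z"
proof -
  have image: "X ` space M = f ` Z ` space M" using assms(1) by (auto simp: image_iff)
  have inverse: "g (f z) = z" if "z \<in> Z ` space M" for z
  proof -
    from that obtain \<omega> where \<omega>: "\<omega> \<in> space M" "z = Z \<omega>" by blast
    then have "f z = X \<omega>" using assms(1) by simp
    then show ?thesis using assms(2) \<omega> by simp
  qed
  have pr: "pr M X (f z) = pr M Z z" if "z \<in> Z ` space M" for z
  proof -
    have "X \<omega> = f z \<longleftrightarrow> Z \<omega> = z" if "\<omega> \<in> space M" for \<omega>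
    proof
      assume "X \<omega> = f z"
      then show "Z \<omega> = z" using assms(2) inverse \<open>z \<in> Z ` space M\<close> that by simp
    qed (use assms(1) that in simp)
    then have "{\<omega> \<in> space M. X \<omega> = f z} = {\<omega> \<in> space M. Z \<omega> = z}"
      by blast
    then show ?thesis unfolding pr_def by simp
  qed
  show ?thesis unfolding shannon_entropy_def image
    by (simp add: sum.reindex[OF inj_on_inverseI[where g=g, OF inverse]] pr)
qed

lemma shannon_entropy_superset:
  assumes "finite S" "X ` space M \<subseteq> S"
  shows "shannon_entropy M X = - (\<Sum>x\<in>S. pr M X x * log 2 (pr M X x))"
proof -
  have "pr M X x = 0" if "x \<notin> X ` space M" for x
  proof -
    from that have empty: "{\<omega> \<in> space M. X \<omega> = x} = {}" by auto
    show ?thesis unfolding pr_def empty by simp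
  qed
  then show ?thesis unfolding shannon_entropy_def
    by (subst sum.mono_neutral_left[OF assms]) auto
qed

lemma shannon_entropy_distr_eq:
  assumes U: "U \<in> measurable M N" and V: "V \<in> measurable M N"
    and eq: "distr M N U = distr M N V"
    and G: "\<And>x. {p \<in> space N. G p = x} \<in> sets N" and fin: "finite (G ` space N)"
  shows "shannon_entropy M (\<lambda>\<omega>. G (U \<omega>)) = shannon_entropy M (\<lambda>\<omega>. G (V \<omega>))"
proof -
  have pr: "pr M (\<lambda>\<omega>. G (W \<omega>)) x = measure (distr M N W) {p \<in> space N. G p = x}"
    if W: "W \<in> measurable M N" for W x
  proof -
    have "W -` {p \<in> space N. G p = x} \<inter> space M = {\<omega> \<in> space M. G (W \<omega>) = x}"
      using measurable_space[OF W] by auto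
    then show ?thesis unfolding pr_def measure_distr[OF W G] by simp
  qed
  have "(\<lambda>\<omega>. G (U \<omega>)) ` space M \<subseteq> G ` space N" "(\<lambda>\<omega>. G (V \<omega>)) ` space M \<subseteq> G ` space N"
    using measurable_space[OF U] measurable_space[OF V] by auto
  then show ?thesis
    by (simp only: shannon_entropy_superset[OF fin] pr[OF U] pr[OF V] eq)
qed

lemma sets_restrict_eq:
  assumes "finite A" "\<And>c. c \<in> A \<Longrightarrow> h c \<in> measurable N (count_space UNIV)"
  shows "{p \<in> space N. restrict (\<lambda>c. h c p) A = x} \<in> sets N"
proof (cases "x \<in> extensional A")
  case True
  then have "{p \<in> space N. restrict (\<lambda>c. h c p) A = x} = {p \<in> space N. \<forall>c\<in>A. h c p = x c}"
    by (auto simp: fun_eq_iff restrict_def extensional_def)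
  also have "\<dots> \<in> sets N"
  proof (rule sets.sets_Collect_finite_All[OF _ assms(1)])
    fix c assume "c \<in> A"
    have "h c -` {x c} \<inter> space N \<in> sets N"
      by (rule measurable_sets[OF assms(2)[OF \<open>c \<in> A\<close>]]) simp
    moreover have "h c -` {x c} \<inter> space N = {p \<in> space N. h c p = x c}" by auto
    ultimately show "{p \<in> space N. h c p = x c} \<in> sets N" by simp
  qed
  finally show ?thesis .
next
  case False
  then have "restrict (\<lambda>c. h c p) A \<noteq> x" for p
    using restrict_extensional by metis
  then have "{p \<in> space N. restrict (\<lambda>c. h c p) A = x} = {}" by blast
  then show ?thesis by (simp only: sets.empty_sets)
qed

lemma measurable_sum_coordinate:
  "(\<lambda>p. (case c of Inl i \<Rightarrow> Inl (fst (p (f i))) | Inr i \<Rightarrow> Inr (snd (p (g i)))) :: 'y + 'r)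
     \<in> measurable (Pi\<^sub>M UNIV (\<lambda>_. count_space (UNIV :: ('y \<times> 'r) set))) (count_space UNIV)"
proof (cases c)
  case (Inl i)
  have "(\<lambda>p. Inl (fst (p (f i))) :: 'y + 'r)
      \<in> measurable (Pi\<^sub>M UNIV (\<lambda>_. count_space (UNIV :: ('y \<times> 'r) set))) (count_space UNIV)"
    by (rule measurable_compose[OF measurable_component_singleton])
      (auto simp: measurable_count_space_eq1)
  then show ?thesis using Inl by simp
next
  case (Inr i)
  have "(\<lambda>p. Inr (snd (p (g i))) :: 'y + 'r)
      \<in> measurable (Pi\<^sub>M UNIV (\<lambda>_. count_space (UNIV :: ('y \<times> 'r) set))) (count_space UNIV)"
    by (rule measurable_compose[OF measurable_component_singleton])
      (auto simp: measurable_count_space_eq1)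
  then show ?thesis using Inr by simp
qed

lemma lim_eq_if_eventually_diff_eq:
  fixes a b e :: "nat \<Rightarrow> real"
  assumes "convergent a" "convergent b" "e \<longlonglongrightarrow> 0" "\<And>n. N \<le> n \<Longrightarrow> e n = a n - b n"
  shows "lim a = lim b"
proof -
  have "(\<lambda>n. a n - b n) \<longlonglongrightarrow> 0"
    using assms(3) by (rule Lim_transform_eventually) (use assms(4) in \<open>auto simp: eventually_sequentially\<close>)
  moreover have "(\<lambda>n. a n - b n) \<longlonglongrightarrow> lim a - lim b"
    using assms(1,2) by (intro tendsto_diff) (simp_all add: convergent_LIMSEQ_iff)
  ultimately show ?thesis using LIMSEQ_unique by force
qed

lemma lim_add:
  fixes a b :: "nat \<Rightarrow> real"
  assumes "convergent a" "convergent b"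
  shows "lim (\<lambda>n. a n + b n) = lim a + lim b"
  using assms by (intro limI tendsto_add) (simp_all add: convergent_LIMSEQ_iff)

context prob_space
begin

lemma sum_pr_image:
  assumes "simple_function M V"
  shows "(\<Sum>v\<in>V ` space M. pr M V v * h (f v)) =
         (\<Sum>w\<in>(\<lambda>\<omega>. f (V \<omega>)) ` space M. pr M (\<lambda>\<omega>. f (V \<omega>)) w * h w)"
proof -
  let ?S = "V ` space M" and ?T = "(\<lambda>\<omega>. f (V \<omega>)) ` space M"
  have fin_S: "finite ?S" using assms by (rule simple_functionD)
  have fin_T: "finite ?T" using fin_S by (metis image_image finite_imageI)
  have pr_sum: "pr M (\<lambda>\<omega>. f (V \<omega>)) w = (\<Sum>v\<in>{v \<in> ?S. f v = w}. pr M V v)" for w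
  proof -
    have "pr M (\<lambda>\<omega>. f (V \<omega>)) w = measure M (\<Union>v\<in>{v \<in> ?S. f v = w}. V -` {v} \<inter> space M)"
      unfolding pr_def by (rule arg_cong[where f="measure M"]) auto
    also have "\<dots> = (\<Sum>v\<in>{v \<in> ?S. f v = w}. measure M (V -` {v} \<inter> space M))"
      by (rule measure_finite_Union)
        (use fin_S assms in \<open>auto simp: disjoint_family_on_def simple_functionD\<close>)
    finally show ?thesis by (simp only: pr_eq_measure_vimage)
  qed
  have "(\<Sum>v\<in>?S. pr M V v * h (f v)) = (\<Sum>w\<in>?T. \<Sum>v\<in>{v \<in> ?S. f v = w}. pr M V v * h (f v))"
    by (rule sum.group[symmetric]) (use fin_S fin_T in auto)
  also have "\<dots> = (\<Sum>w\<in>?T. pr M (\<lambda>\<omega>. f (V \<omega>)) w * h w)"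
    by (simp add: pr_sum sum_distrib_right)
  finally show ?thesis .
qed

lemma pr_le_pr_fun:
  assumes "\<forall>\<omega>\<in>space M. W \<omega> = f (V \<omega>)" "simple_function M W" "v \<in> V ` space M"
  shows "pr M V v \<le> pr M W (f v)"
  unfolding pr_eq_measure_vimage
  by (intro finite_measure_mono simple_functionD(2)[OF assms(2)]) (use assms(1) in auto)

text \<open>The summand with \<open>pr = 0\<close> vanishes, and otherwise every marginal probability is positive,
  so the logarithm of the quotient splits.\<close>
lemma cond_entropy_eq_shannon:
  assumes X: "simple_function M X" and Z: "simple_function M Z"
  shows "cond_entropy M X Z = shannon_entropy M (\<lambda>\<omega>. (X \<omega>, Z \<omega>)) - shannon_entropy M Z"
proof -
  let ?V = "\<lambda>\<omega>. (X \<omega>, Z \<omega>)"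
  have V: "simple_function M ?V" using X Z by simp
  have split: "pr M ?V v * log 2 (pr M ?V v / pr M Z (snd v)) =
      pr M ?V v * log 2 (pr M ?V v) - pr M ?V v * log 2 (pr M Z (snd v))"
    if "v \<in> ?V ` space M" for v
  proof (cases "pr M ?V v = 0")
    case False
    then have "0 < pr M ?V v" by (simp add: pr_def order_less_le)
    moreover have "pr M ?V v \<le> pr M Z (snd v)" by (rule pr_le_pr_fun[OF _ Z that]) simp
    ultimately show ?thesis by (simp add: log_divide right_diff_distrib)
  qed simp
  have "cond_entropy M X Z = - (\<Sum>v\<in>?V ` space M. pr M ?V v * log 2 (pr M ?V v / pr M Z (snd v)))"
    unfolding cond_entropy_def by (simp add: case_prod_beta)
  also have "\<dots> = - ((\<Sum>v\<in>?V ` space M. pr M ?V v * log 2 (pr M ?V v))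
                    - (\<Sum>v\<in>?V ` space M. pr M ?V v * log 2 (pr M Z (snd v))))"
    by (simp add: sum_subtractf[symmetric] split cong: sum.cong)
  also have "(\<Sum>v\<in>?V ` space M. pr M ?V v * log 2 (pr M Z (snd v)))
      = (\<Sum>z\<in>Z ` space M. pr M Z z * log 2 (pr M Z z))"
    using sum_pr_image[OF V, of "\<lambda>z. log 2 (pr M Z z)" snd] by simp
  finally show ?thesis unfolding shannon_entropy_def by simp
qed

lemma cond_mutual_info_eq_shannon:
  assumes X: "simple_function M X" and Y: "simple_function M Y" and Z: "simple_function M Z"
  shows "cond_mutual_info M X Y Z
    = shannon_entropy M (\<lambda>\<omega>. (X \<omega>, Z \<omega>)) + shannon_entropy M (\<lambda>\<omega>. (Y \<omega>, Z \<omega>))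
      - shannon_entropy M (\<lambda>\<omega>. (X \<omega>, Y \<omega>, Z \<omega>)) - shannon_entropy M Z"
proof -
  let ?V = "\<lambda>\<omega>. (X \<omega>, Y \<omega>, Z \<omega>)"
  let ?XZ = "\<lambda>\<omega>. (X \<omega>, Z \<omega>)" and ?YZ = "\<lambda>\<omega>. (Y \<omega>, Z \<omega>)"
  let ?fxz = "\<lambda>v. (fst v, snd (snd v))" and ?fyz = "\<lambda>v. (fst (snd v), snd (snd v))"
  let ?plogp = "\<lambda>v. pr M ?V v * log 2 (pr M ?V v)"
  let ?plog = "\<lambda>W f v. pr M ?V v * log 2 (pr M W (f v))"
  have V: "simple_function M ?V" using X Y Z by simp
  have split: "pr M ?V v * log 2 (pr M ?V v * pr M Z (snd (snd v)) / (pr M ?XZ (?fxz v) * pr M ?YZ (?fyz v)))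
      = ?plogp v + ?plog Z (\<lambda>v. snd (snd v)) v - ?plog ?XZ ?fxz v - ?plog ?YZ ?fyz v"
    if "v \<in> ?V ` space M" for v
  proof (cases "pr M ?V v = 0")
    case False
    then have "0 < pr M ?V v" by (simp add: pr_def order_less_le)
    moreover have "pr M ?V v \<le> pr M Z (snd (snd v))"
      by (rule pr_le_pr_fun[OF _ Z that]) simp
    moreover have "pr M ?V v \<le> pr M ?XZ (?fxz v)"
      by (rule pr_le_pr_fun[OF _ _ that]) (use X Z in simp_all)
    moreover have "pr M ?V v \<le> pr M ?YZ (?fyz v)"
      by (rule pr_le_pr_fun[OF _ _ that]) (use Y Z in simp_all)
    ultimately show ?thesis by (simp add: log_divide log_mult algebra_simps)
  qed simp
  have marginal: "(\<Sum>v\<in>?V ` space M. ?plog W f v) = (\<Sum>w\<in>W ` space M. pr M W w * log 2 (pr M W w))"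
    if "W = (\<lambda>\<omega>. f (?V \<omega>))" for W f
    using sum_pr_image[OF V, of "\<lambda>w. log 2 (pr M W w)" f] that by simp
  have "cond_mutual_info M X Y Z = (\<Sum>v\<in>?V ` space M.
      pr M ?V v * log 2 (pr M ?V v * pr M Z (snd (snd v)) / (pr M ?XZ (?fxz v) * pr M ?YZ (?fyz v))))"
    unfolding cond_mutual_info_def by (simp add: case_prod_beta)
  also have "\<dots> = (\<Sum>v\<in>?V ` space M. ?plogp v) + (\<Sum>v\<in>?V ` space M. ?plog Z (\<lambda>v. snd (snd v)) v)
      - (\<Sum>v\<in>?V ` space M. ?plog ?XZ ?fxz v) - (\<Sum>v\<in>?V ` space M. ?plog ?YZ ?fyz v)"
    by (simp only: sum.cong[OF refl split] sum_subtractf sum.distrib)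
  also have "\<dots> = - shannon_entropy M ?V - shannon_entropy M Z + shannon_entropy M ?XZ
      + shannon_entropy M ?YZ"
    unfolding shannon_entropy_def by (subst (1 2 3) marginal) (simp_all add: fun_eq_iff)
  finally show ?thesis by simp
qed

lemma cond_mutual_info_nonneg:
  assumes X: "simple_function M X" and Y: "simple_function M Y" and Z: "simple_function M Z"
  shows "0 \<le> cond_mutual_info M X Y Z"
proof -
  interpret information_space M 2 by standard simp
  have distributed: "simple_distributed M V (pr M V)" if "simple_function M V" for V
    by (rule simple_distributedI[OF that]) (auto simp: pr_eq_measure_vimage)
  have "conditional_mutual_information 2 (count_space (X ` space M)) (count_space (Y ` space M))
      (count_space (Z ` space M)) X Y Z = cond_mutual_info M X Y Z"
    unfolding cond_mutual_info_def
    using X Y Z by (subst conditional_mutual_information_eq[OF distributed distributed distributed distributed]) simp_all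
  then show ?thesis using conditional_mutual_information_nonneg[OF X Y Z] by simp
qed

lemma cond_mutual_info_eq_0:
  assumes Z: "simple_function M Z"
    and factorizes: "\<And>x y z. pr M (\<lambda>\<omega>. (X \<omega>, V \<omega>, Z \<omega>)) (x, y, z) * pr M Z z =
        pr M (\<lambda>\<omega>. (X \<omega>, Z \<omega>)) (x, z) * pr M (\<lambda>\<omega>. (V \<omega>, Z \<omega>)) (y, z)"
  shows "cond_mutual_info M X V Z = 0"
  unfolding cond_mutual_info_def
proof (rule sum.neutral, safe)
  fix \<omega> assume "\<omega> \<in> space M"
  let ?x = "X \<omega>" and ?y = "V \<omega>" and ?z = "Z \<omega>"
  let ?p = "pr M (\<lambda>\<omega>. (X \<omega>, V \<omega>, Z \<omega>)) (?x, ?y, ?z)"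
  let ?q = "pr M (\<lambda>\<omega>. (X \<omega>, Z \<omega>)) (?x, ?z) * pr M (\<lambda>\<omega>. (V \<omega>, Z \<omega>)) (?y, ?z)"
  show "?p * log 2 (?p * pr M Z ?z / ?q) = 0"
  proof (cases "?p = 0")
    case False
    then have "0 < ?p" by (simp add: pr_def order_less_le)
    moreover have "?p \<le> pr M Z (snd (snd (?x, ?y, ?z)))"
      by (rule pr_le_pr_fun[OF _ Z]) (use \<open>\<omega> \<in> space M\<close> in auto)
    ultimately have "?q \<noteq> 0" unfolding factorizes[symmetric] by simp
    then show ?thesis unfolding factorizes by simp
  qed simp
qed

end

abbreviation window_coords :: "int \<Rightarrow> int \<Rightarrow> (int + int) set" where
  "window_coords a b \<equiv> Inl ` {a..b}"

locale finite_process = prob_space M for M :: "'a measure" +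
  fixes Y :: "int \<Rightarrow> 'a \<Rightarrow> 'y::finite" and R :: "int \<Rightarrow> 'a \<Rightarrow> 'r::finite"
  assumes measurable_Y: "\<And>t. Y t \<in> measurable M (count_space UNIV)"
    and measurable_R: "\<And>t. R t \<in> measurable M (count_space UNIV)"
begin

definition obs :: "'a \<Rightarrow> int + int \<Rightarrow> 'y + 'r" where
  "obs \<omega> c = (case c of Inl i \<Rightarrow> Inl (Y i \<omega>) | Inr i \<Rightarrow> Inr (R i \<omega>))"

definition coord_entropy :: "(int + int) set \<Rightarrow> real" where
  "coord_entropy A = shannon_entropy M (\<lambda>\<omega>. restrict (obs \<omega>) A)"

definition coord_cond_entropy :: "(int + int) set \<Rightarrow> (int + int) set \<Rightarrow> real" where
  "coord_cond_entropy A C = coord_entropy (A \<union> C) - coord_entropy C"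

definition coord_cmi :: "(int + int) set \<Rightarrow> (int + int) set \<Rightarrow> (int + int) set \<Rightarrow> real" where
  "coord_cmi A B C = coord_entropy (A \<union> C) + coord_entropy (B \<union> C)
     - coord_entropy (A \<union> (B \<union> C)) - coord_entropy C"

definition window_cond_entropy :: "int \<Rightarrow> int \<Rightarrow> int \<Rightarrow> real" where
  "window_cond_entropy t a b = coord_cond_entropy {Inr t} (window_coords a b)"

definition encodes :: "('a \<Rightarrow> 'b) \<Rightarrow> (int + int) set \<Rightarrow> bool" where
  "encodes X A \<longleftrightarrow> finite A \<and> (\<exists>f g. (\<forall>\<omega>\<in>space M. X \<omega> = f (restrict (obs \<omega>) A)) \<and>
      (\<forall>\<omega>\<in>space M. restrict (obs \<omega>) A = g (X \<omega>)))"

lemma measurable_obs: "(\<lambda>\<omega>. obs \<omega> c) \<in> measurable M (count_space UNIV)"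
proof (cases c)
  case (Inl i)
  have "(\<lambda>\<omega>. Inl (Y i \<omega>) :: 'y + 'r) \<in> measurable M (count_space UNIV)"
    by (rule measurable_compose[OF measurable_Y]) (simp add: measurable_count_space_eq1)
  then show ?thesis by (simp add: obs_def Inl)
next
  case (Inr i)
  have "(\<lambda>\<omega>. Inr (R i \<omega>) :: 'y + 'r) \<in> measurable M (count_space UNIV)"
    by (rule measurable_compose[OF measurable_R]) (simp add: measurable_count_space_eq1)
  then show ?thesis by (simp add: obs_def Inr)
qed

lemma simple_function_restrict_obs:
  assumes "finite A"
  shows "simple_function M (\<lambda>\<omega>. restrict (obs \<omega>) A)"
  unfolding simple_function_def
proof safe
  have "(\<lambda>\<omega>. restrict (obs \<omega>) A) ` space M \<subseteq> PiE A (\<lambda>_. UNIV)" by auto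
  then show "finite ((\<lambda>\<omega>. restrict (obs \<omega>) A) ` space M)"
    by (rule finite_subset) (use assms in \<open>intro finite_PiE, auto\<close>)
next
  fix \<omega>
  have "{\<omega>' \<in> space M. restrict (obs \<omega>') A = restrict (obs \<omega>) A} \<in> sets M"
    by (rule sets_restrict_eq[OF assms measurable_obs])
  moreover have "(\<lambda>\<omega>. restrict (obs \<omega>) A) -` {restrict (obs \<omega>) A} \<inter> space M
      = {\<omega>' \<in> space M. restrict (obs \<omega>') A = restrict (obs \<omega>) A}" by auto
  ultimately show "(\<lambda>\<omega>. restrict (obs \<omega>) A) -` {restrict (obs \<omega>) A} \<inter> space M \<in> sets M"
    by simp
qed

lemma coord_entropy_encodes:
  assumes "encodes X A"
  shows "shannon_entropy M X = coord_entropy A"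
proof -
  from assms obtain f g where "\<forall>\<omega>\<in>space M. X \<omega> = f (restrict (obs \<omega>) A)"
    "\<forall>\<omega>\<in>space M. restrict (obs \<omega>) A = g (X \<omega>)"
    unfolding encodes_def by blast
  then show ?thesis unfolding coord_entropy_def by (rule shannon_entropy_cong_bij)
qed

lemma simple_function_encodes:
  assumes "encodes X A"
  shows "simple_function M X"
proof -
  from assms obtain f where f: "\<forall>\<omega>\<in>space M. X \<omega> = f (restrict (obs \<omega>) A)" and "finite A"
    unfolding encodes_def by blast
  then have "simple_function M (f \<circ> (\<lambda>\<omega>. restrict (obs \<omega>) A))"
    using simple_function_restrict_obs by simp
  then show ?thesis by (rule simple_function_cong[THEN iffD1, rotated]) (use f in auto)
qed

lemma encodes_restrict_obs: "finite A \<Longrightarrow> encodes (\<lambda>\<omega>. restrict (obs \<omega>) A) A"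
  unfolding encodes_def by (intro conjI exI[of _ id]) auto

lemma encodes_pair:
  assumes "encodes X A" "encodes Z B"
  shows "encodes (\<lambda>\<omega>. (X \<omega>, Z \<omega>)) (A \<union> B)"
proof -
  from assms(1) obtain f g where f: "\<forall>\<omega>\<in>space M. X \<omega> = f (restrict (obs \<omega>) A)"
    and g: "\<forall>\<omega>\<in>space M. restrict (obs \<omega>) A = g (X \<omega>)" and "finite A"
    unfolding encodes_def by blast
  from assms(2) obtain f' g' where f': "\<forall>\<omega>\<in>space M. Z \<omega> = f' (restrict (obs \<omega>) B)"
    and g': "\<forall>\<omega>\<in>space M. restrict (obs \<omega>) B = g' (Z \<omega>)" and "finite B"
    unfolding encodes_def by blast
  let ?F = "\<lambda>u. (f (restrict u A), f' (restrict u B))"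
  let ?G = "\<lambda>(x, z). restrict (\<lambda>c. if c \<in> A then g x c else g' z c) (A \<union> B)"
  show ?thesis unfolding encodes_def
  proof (intro conjI exI[of _ ?F] exI[of _ ?G] ballI)
    show "finite (A \<union> B)" using \<open>finite A\<close> \<open>finite B\<close> by simp
  next
    fix \<omega> assume "\<omega> \<in> space M"
    have "restrict (restrict (obs \<omega>) (A \<union> B)) A = restrict (obs \<omega>) A"
         "restrict (restrict (obs \<omega>) (A \<union> B)) B = restrict (obs \<omega>) B"
      by (auto simp: restrict_def fun_eq_iff)
    then show "(X \<omega>, Z \<omega>) = ?F (restrict (obs \<omega>) (A \<union> B))"
      using f f' \<open>\<omega> \<in> space M\<close> by simp
    have "g (X \<omega>) c = obs \<omega> c" if "c \<in> A" for c
      using g \<open>\<omega> \<in> space M\<close> that by (metis restrict_apply')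
    moreover have "g' (Z \<omega>) c = obs \<omega> c" if "c \<in> B" for c
      using g' \<open>\<omega> \<in> space M\<close> that by (metis restrict_apply')
    ultimately show "restrict (obs \<omega>) (A \<union> B) = ?G (X \<omega>, Z \<omega>)"
      by (auto simp: restrict_def fun_eq_iff)
  qed
qed

lemma encodes_R: "encodes (R t) {Inr t}"
  unfolding encodes_def
proof (intro conjI exI[of _ "\<lambda>u. projr (u (Inr t))"]
    exI[of _ "\<lambda>r. restrict (\<lambda>c. Inr r) {Inr t}"] ballI)
  fix \<omega>
  show "R t \<omega> = projr (restrict (obs \<omega>) {Inr t} (Inr t))" by (simp add: obs_def)
  show "restrict (obs \<omega>) {Inr t} = restrict (\<lambda>c. Inr (R t \<omega>)) {Inr t}"
    by (auto simp: restrict_def fun_eq_iff obs_def)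
qed simp

lemma encodes_window: "encodes (window Y a b) (window_coords a b)"
  unfolding encodes_def
proof (intro conjI exI[of _ "\<lambda>u. map (\<lambda>i. projl (u (Inl i))) [a..b]"]
    exI[of _ "\<lambda>l. restrict (\<lambda>c. case c of Inl i \<Rightarrow> Inl (l ! nat (i - a)) | Inr _ \<Rightarrow> undefined)
                 (window_coords a b)"] ballI)
  fix \<omega>
  show "window Y a b \<omega> = map (\<lambda>i. projl (restrict (obs \<omega>) (window_coords a b) (Inl i))) [a..b]"
    by (auto simp: window_def obs_def)
  show "restrict (obs \<omega>) (window_coords a b) =
     restrict (\<lambda>c. case c of Inl i \<Rightarrow> Inl (window Y a b \<omega> ! nat (i - a)) | Inr _ \<Rightarrow> undefined)
       (window_coords a b)"
    by (auto simp: restrict_def fun_eq_iff obs_def window_def)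
qed simp

lemma cond_entropy_encodes:
  assumes "encodes X A" "encodes Z C"
  shows "cond_entropy M X Z = coord_cond_entropy A C"
  using cond_entropy_eq_shannon[OF simple_function_encodes[OF assms(1)] simple_function_encodes[OF assms(2)]]
    coord_entropy_encodes[OF encodes_pair[OF assms]] coord_entropy_encodes[OF assms(2)]
  by (simp add: coord_cond_entropy_def)

lemma cond_mutual_info_encodes:
  assumes "encodes X A" "encodes V B" "encodes Z C"
  shows "cond_mutual_info M X V Z = coord_cmi A B C"
  using cond_mutual_info_eq_shannon[OF simple_function_encodes[OF assms(1)]
      simple_function_encodes[OF assms(2)] simple_function_encodes[OF assms(3)]]
    coord_entropy_encodes[OF encodes_pair[OF assms(1,3)]] coord_entropy_encodes[OF encodes_pair[OF assms(2,3)]]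
    coord_entropy_encodes[OF encodes_pair[OF assms(1) encodes_pair[OF assms(2,3)]]]
    coord_entropy_encodes[OF assms(3)]
  by (simp add: coord_cmi_def)

lemma coord_cmi_nonneg:
  assumes "finite A" "finite B" "finite C"
  shows "0 \<le> coord_cmi A B C"
  using cond_mutual_info_nonneg[OF simple_function_restrict_obs[OF assms(1)]
      simple_function_restrict_obs[OF assms(2)] simple_function_restrict_obs[OF assms(3)]]
  by (simp add: cond_mutual_info_encodes[OF encodes_restrict_obs encodes_restrict_obs encodes_restrict_obs] assms)

lemma coord_cond_entropy_antimono:
  assumes "finite A" "finite D" "C \<subseteq> D"
  shows "coord_cond_entropy A D \<le> coord_cond_entropy A C"
proof -
  have "finite C" "D \<union> C = D" using assms finite_subset by blast+
  then show ?thesis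
    using coord_cmi_nonneg[of A D C] assms unfolding coord_cmi_def coord_cond_entropy_def by simp
qed

lemma coord_cond_entropy_nonneg:
  assumes "finite A" "finite C"
  shows "0 \<le> coord_cond_entropy A C"
proof -
  have "A \<union> C \<union> C = A \<union> C" "A \<union> C \<union> (A \<union> C \<union> C) = A \<union> C" by auto
  then show ?thesis
    using coord_cmi_nonneg[of "A \<union> C" "A \<union> C" C] assms
    by (simp add: coord_cmi_def coord_cond_entropy_def)
qed

lemma convergent_coord_cond_entropy:
  assumes "finite A" "\<And>n. finite (C n)" "\<And>n. C n \<subseteq> C (Suc n)"
  shows "convergent (\<lambda>n. coord_cond_entropy A (C n))"
proof -
  have "decseq (\<lambda>n. coord_cond_entropy A (C n))"
    by (rule decseq_SucI) (rule coord_cond_entropy_antimono[OF assms])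
  then obtain L where "(\<lambda>n. coord_cond_entropy A (C n)) \<longlonglongrightarrow> L"
    using coord_cond_entropy_nonneg[OF assms(1,2)] by (metis decseq_convergent)
  then show ?thesis by (auto simp: convergent_def)
qed

lemma coord_cmi_commute: "coord_cmi A B C = coord_cmi B A C"
  by (simp add: coord_cmi_def Un_ac)

lemma coord_cmi_eq_cond_entropy_diff:
  "coord_cmi A B C = coord_cond_entropy A C - coord_cond_entropy A (B \<union> C)"
  by (simp add: coord_cmi_def coord_cond_entropy_def Un_ac)

lemma convergent_coord_cmi:
  assumes "finite A" "\<And>n. finite (B n)" "\<And>n. finite (C n)" "\<And>n. C n \<subseteq> C (Suc n)"
    "\<And>n. B n \<union> C n \<subseteq> B (Suc n) \<union> C (Suc n)"
  shows "convergent (\<lambda>n. coord_cmi A (B n) (C n))"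
proof -
  have "convergent (\<lambda>n. coord_cond_entropy A (C n) - coord_cond_entropy A (B n \<union> C n))"
    by (intro convergent_diff convergent_coord_cond_entropy) (use assms in auto)
  then show ?thesis by (simp only: coord_cmi_eq_cond_entropy_diff)
qed

end

abbreviation path_space :: "('i \<Rightarrow> 'y \<times> 'r) measure" where
  "path_space \<equiv> Pi\<^sub>M UNIV (\<lambda>_. count_space UNIV)"

locale stationary_process = finite_process M Y R
  for M :: "'a measure" and Y :: "int \<Rightarrow> 'a \<Rightarrow> 'y::finite" and R :: "int \<Rightarrow> 'a \<Rightarrow> 'r::finite" +
  assumes stationary: "jointly_stationary M Y R"
begin

definition shifted_path :: "nat \<Rightarrow> 'a \<Rightarrow> int \<Rightarrow> 'y \<times> 'r" where
  "shifted_path j \<omega> = (\<lambda>t. (Y (t + int j) \<omega>, R (t + int j) \<omega>))"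

definition shift_coord :: "nat \<Rightarrow> int + int \<Rightarrow> int + int" where
  "shift_coord j = map_sum (\<lambda>i. i + int j) (\<lambda>i. i + int j)"

lemma measurable_shifted_path: "shifted_path j \<in> measurable M path_space"
proof -
  have "(\<lambda>\<omega>. (Y t \<omega>, R t \<omega>)) \<in> measurable M (count_space UNIV)" for t
    using measurable_Y measurable_R by measurable
  then have "(\<lambda>\<omega>. \<lambda>t\<in>UNIV. (Y (t + int j) \<omega>, R (t + int j) \<omega>)) \<in> measurable M path_space"
    by (intro measurable_restrict)
  then show ?thesis unfolding shifted_path_def by (simp add: restrict_UNIV)
qed

lemma distr_shifted_path: "distr M path_space (shifted_path j) = distr M path_space (shifted_path 0)"
proof (induction j)
  case (Suc j)
  let ?S = "\<lambda>f. \<lambda>t::int. f (t + 1)"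
  have "(\<lambda>f. \<lambda>t\<in>UNIV. f (t + 1)) \<in> measurable path_space path_space"
    by (rule measurable_restrict) (rule measurable_component_singleton, simp)
  then have measurable_S: "?S \<in> measurable path_space path_space" by (simp add: restrict_UNIV)
  have "shifted_path (Suc j) = ?S \<circ> shifted_path j" "shifted_path 1 = ?S \<circ> shifted_path 0"
    by (auto simp: shifted_path_def fun_eq_iff algebra_simps)
  then have "distr M path_space (shifted_path (Suc j)) = distr (distr M path_space (shifted_path j)) path_space ?S"
    "distr M path_space (shifted_path 1) = distr (distr M path_space (shifted_path 0)) path_space ?S"
    by (simp_all add: distr_distr[OF measurable_S measurable_shifted_path])
  moreover have "distr M path_space (shifted_path 1) = distr M path_space (shifted_path 0)"
    using stationary unfolding jointly_stationary_def shifted_path_def by simp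
  ultimately show ?case using Suc by simp
qed simp

lemma coord_entropy_shift:
  assumes "finite A"
  shows "coord_entropy (shift_coord j ` A) = coord_entropy A"
proof -
  define coords :: "(int \<Rightarrow> 'y \<times> 'r) \<Rightarrow> int + int \<Rightarrow> 'y + 'r" where
    "coords p = restrict (\<lambda>c. case c of Inl i \<Rightarrow> Inl (fst (p i)) | Inr i \<Rightarrow> Inr (snd (p i))) A" for p
  have inj: "inj (shift_coord j)"
  proof (rule injI)
    fix x y assume "shift_coord j x = shift_coord j y"
    then show "x = y" by (cases x; cases y) (simp_all add: shift_coord_def)
  qed
  have "coord_entropy (shift_coord j ` A) = shannon_entropy M (\<lambda>\<omega>. coords (shifted_path j \<omega>))"
    unfolding coord_entropy_def
  proof (rule shannon_entropy_cong_bij[where f="\<lambda>v. restrict (\<lambda>c. v (inv (shift_coord j) c)) (shift_coord j ` A)"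
        and g="\<lambda>u. restrict (\<lambda>c. u (shift_coord j c)) A"])
    show "\<forall>\<omega>\<in>space M. restrict (obs \<omega>) (shift_coord j ` A) =
       restrict (\<lambda>c. coords (shifted_path j \<omega>) (inv (shift_coord j) c)) (shift_coord j ` A)"
      using inj by (auto simp: fun_eq_iff restrict_def coords_def shifted_path_def obs_def shift_coord_def
          split: sum.splits)
    show "\<forall>\<omega>\<in>space M. coords (shifted_path j \<omega>) = restrict (\<lambda>c. restrict (obs \<omega>) (shift_coord j ` A) (shift_coord j c)) A"
      by (auto simp: fun_eq_iff restrict_def coords_def shifted_path_def obs_def shift_coord_def
          split: sum.splits)
  qed
  also have "\<dots> = shannon_entropy M (\<lambda>\<omega>. coords (shifted_path 0 \<omega>))"
  proof (rule shannon_entropy_distr_eq[OF measurable_shifted_path measurable_shifted_path distr_shifted_path])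
    show "{p \<in> space path_space. coords p = x} \<in> sets path_space" for x
      unfolding coords_def by (rule sets_restrict_eq[OF assms measurable_sum_coordinate])
    have "coords ` space path_space \<subseteq> PiE A (\<lambda>_. UNIV)" unfolding coords_def by auto
    then show "finite (coords ` space path_space)"
      by (rule finite_subset) (use assms in \<open>intro finite_PiE, auto\<close>)
  qed
  also have "\<dots> = coord_entropy A"
    unfolding coord_entropy_def
    by (rule arg_cong[where f="shannon_entropy M"])
      (auto simp: fun_eq_iff restrict_def coords_def shifted_path_def obs_def split: sum.splits)
  finally show ?thesis .
qed

lemma shift_coord_window: "shift_coord j ` window_coords a b = window_coords (a + int j) (b + int j)"
proof -
  have "{a + int j..b + int j} = (\<lambda>i. i + int j) ` {a..b}" by simp
  then show ?thesis
    by (simp add: shift_coord_def image_image del: image_add_atLeastAtMost image_add_atLeastAtMost')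
qed

lemma window_cond_entropy_shift:
  "window_cond_entropy (t + int j) (a + int j) (b + int j) = window_cond_entropy t a b"
proof -
  have "shift_coord j ` ({Inr t} \<union> window_coords a b) = {Inr (t + int j)} \<union> window_coords (a + int j) (b + int j)"
    unfolding image_Un shift_coord_window by (simp add: shift_coord_def)
  then show ?thesis
    using coord_entropy_shift[of "{Inr t} \<union> window_coords a b" j] coord_entropy_shift[of "window_coords a b" j]
    by (simp add: window_cond_entropy_def coord_cond_entropy_def shift_coord_window)
qed

lemma coord_entropy_R_shift: "coord_entropy {Inr (t + int j)} = coord_entropy {Inr t}"
  using coord_entropy_shift[of "{Inr t}" j] by (simp add: shift_coord_def)

definition past_limit :: real where
  "past_limit = lim (\<lambda>n. window_cond_entropy 0 (- int n) 0)"

definition two_sided_limit :: real where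
  "two_sided_limit = lim (\<lambda>n. window_cond_entropy 0 (- int n) (int n))"

lemma tendsto_window_cond_entropy_past:
  "(\<lambda>n. window_cond_entropy (int j) (- int n) (int j)) \<longlonglongrightarrow> past_limit"
proof -
  have "convergent (\<lambda>n. window_cond_entropy 0 (- int n) 0)"
    unfolding window_cond_entropy_def by (rule convergent_coord_cond_entropy) auto
  then have "(\<lambda>n. window_cond_entropy 0 (- int (n + j)) 0) \<longlonglongrightarrow> past_limit"
    unfolding past_limit_def convergent_LIMSEQ_iff by (rule LIMSEQ_ignore_initial_segment)
  moreover have "window_cond_entropy (int j) (- int n) (int j) = window_cond_entropy 0 (- int (n + j)) 0" for n
    using window_cond_entropy_shift[of 0 j "- int (n + j)" 0] by simp
  ultimately show ?thesis by simp
qed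

text \<open>By stationarity the window around \<open>R\<^sub>j\<close> is a shifted window around \<open>R\<^sub>0\<close>, and it is
  sandwiched between the symmetric windows of radius \<open>n - j\<close> and \<open>n + j\<close>.\<close>
lemma tendsto_window_cond_entropy_two_sided:
  "(\<lambda>n. window_cond_entropy (int j) (- int n) (int n)) \<longlonglongrightarrow> two_sided_limit"
proof (rule tendsto_sandwich)
  let ?c = "\<lambda>n. window_cond_entropy 0 (- int n) (int n)"
  have "convergent ?c"
    unfolding window_cond_entropy_def by (rule convergent_coord_cond_entropy) auto
  then have c: "?c \<longlonglongrightarrow> two_sided_limit" by (simp add: two_sided_limit_def convergent_LIMSEQ_iff)
  show "(\<lambda>n. ?c (n + j)) \<longlonglongrightarrow> two_sided_limit" using c by (rule LIMSEQ_ignore_initial_segment)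
  show "(\<lambda>n. ?c (n - j)) \<longlonglongrightarrow> two_sided_limit" using LIMSEQ_offset[of "\<lambda>n. ?c (n - j)" j] c by simp
  have shifted: "window_cond_entropy (int j) (- int n) (int n) = window_cond_entropy 0 (- int n - int j) (int n - int j)" for n
    using window_cond_entropy_shift[of 0 j "- int n - int j" "int n - int j"] by simp
  show "\<forall>\<^sub>F n in sequentially. ?c (n + j) \<le> window_cond_entropy (int j) (- int n) (int n)"
    unfolding shifted unfolding window_cond_entropy_def
    by (intro always_eventually allI coord_cond_entropy_antimono) auto
  show "\<forall>\<^sub>F n in sequentially. window_cond_entropy (int j) (- int n) (int n) \<le> ?c (n - j)"
    unfolding shifted unfolding window_cond_entropy_def eventually_sequentially
    by (intro exI[of _ j] allI impI coord_cond_entropy_antimono) auto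
qed

lemmas tendsto_window_cond_entropy_past_0 = tendsto_window_cond_entropy_past[of 0, simplified]
lemmas tendsto_window_cond_entropy_two_sided_0 = tendsto_window_cond_entropy_two_sided[of 0, simplified]

end

definition past_coords :: "int \<Rightarrow> (int + int) set" where
  "past_coords t = Inl ` {..t} \<union> Inr ` {..<t}"

definition future_coords :: "int \<Rightarrow> (int + int) set" where
  "future_coords t = Inl ` {t<..} \<union> Inr ` {t<..}"

locale generator_process = finite_process M Y R
  for M :: "'a measure" and Y :: "int \<Rightarrow> 'a \<Rightarrow> 'y::finite" and R :: "int \<Rightarrow> 'a \<Rightarrow> 'r::finite" +
  assumes generator: "generator_condition M Y R"
begin

lemma coord_cmi_generator:
  assumes "finite A" "finite B" "A \<subseteq> past_coords t" "B \<subseteq> future_coords t"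
  shows "coord_cmi A B {Inr t} = 0"
proof -
  let ?XA = "\<lambda>\<omega>. restrict (obs \<omega>) A" and ?XB = "\<lambda>\<omega>. restrict (obs \<omega>) B"
  define past where "past = (\<lambda>\<omega> s::nat. (Y (t - int s) \<omega>, R (t - 1 - int s) \<omega>))"
  define fut where "fut = (\<lambda>\<omega> s::nat. (Y (t + 1 + int s) \<omega>, R (t + 1 + int s) \<omega>))"
  define past_value where "past_value = (\<lambda>p c. (case c of Inl i \<Rightarrow> Inl (fst (p (nat (t - i))))
      | Inr i \<Rightarrow> Inr (snd (p (nat (t - 1 - i))))) :: 'y + 'r)"
  define future_value where "future_value = (\<lambda>p c. (case c of Inl i \<Rightarrow> Inl (fst (p (nat (i - t - 1))))
      | Inr i \<Rightarrow> Inr (snd (p (nat (i - t - 1))))) :: 'y + 'r)"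
  have XA: "?XA \<omega> = restrict (past_value (past \<omega>)) A" for \<omega>
  proof -
    have "obs \<omega> c = past_value (past \<omega>) c" if "c \<in> A" for c
      using that assms(3) by (auto simp: obs_def past_value_def past_def past_coords_def)
    then show ?thesis by (auto simp: restrict_def fun_eq_iff)
  qed
  have XB: "?XB \<omega> = restrict (future_value (fut \<omega>)) B" for \<omega>
  proof -
    have "obs \<omega> c = future_value (fut \<omega>) c" if "c \<in> B" for c
      using that assms(4) by (auto simp: obs_def future_value_def fut_def future_coords_def)
    then show ?thesis by (auto simp: restrict_def fun_eq_iff)
  qed
  have factorizes: "pr M (\<lambda>\<omega>. (?XA \<omega>, ?XB \<omega>, R t \<omega>)) (x, y, z) * pr M (R t) z =
      pr M (\<lambda>\<omega>. (?XA \<omega>, R t \<omega>)) (x, z) * pr M (\<lambda>\<omega>. (?XB \<omega>, R t \<omega>)) (y, z)" for x y z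
  proof -
    let ?SA = "{p \<in> space path_space. restrict (\<lambda>c. past_value p c) A = x}"
    let ?SB = "{p \<in> space path_space. restrict (\<lambda>c. future_value p c) B = y}"
    have "?SA \<in> sets path_space" "?SB \<in> sets path_space"
      unfolding past_value_def future_value_def
      by (rule sets_restrict_eq[OF assms(1) measurable_sum_coordinate],
          rule sets_restrict_eq[OF assms(2) measurable_sum_coordinate])
    then have "measure M {\<omega> \<in> space M. past \<omega> \<in> ?SA \<and> fut \<omega> \<in> ?SB \<and> R t \<omega> = z} *
          measure M {\<omega> \<in> space M. R t \<omega> = z} =
        measure M {\<omega> \<in> space M. past \<omega> \<in> ?SA \<and> R t \<omega> = z} *
          measure M {\<omega> \<in> space M. fut \<omega> \<in> ?SB \<and> R t \<omega> = z}"
      using generator unfolding generator_condition_def Let_def past_def fut_def by blast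
    then show ?thesis
      unfolding pr_def by (simp add: XA XB space_PiM conj_commute)
  qed
  have "cond_mutual_info M ?XA ?XB (R t) = 0"
    by (rule cond_mutual_info_eq_0[OF simple_function_encodes[OF encodes_R] factorizes])
  then show ?thesis
    by (simp add: cond_mutual_info_encodes[OF encodes_restrict_obs[OF assms(1)]
          encodes_restrict_obs[OF assms(2)] encodes_R])
qed

end

lemma window_coords_Un:
  "a \<le> b + 1 \<Longrightarrow> b \<le> c \<Longrightarrow> window_coords a b \<union> window_coords (b + 1) c = window_coords a c"
  unfolding image_Un[symmetric] by (rule arg_cong[where f="image Inl"]) auto

context finite_process
begin

lemma coord_cmi_chain_identity:
  "coord_cmi b (F \<union> H) (a \<union> (P \<union> F))
     - ((coord_cmi a b P - coord_cmi a b (F \<union> P)) + coord_cmi a F (P \<union> b)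
        + coord_cmi a (F \<union> H) (P \<union> (F \<union> b)))
   = coord_cmi b H (P \<union> F) - coord_cmi a (F \<union> H) P"
  unfolding coord_cmi_def by (simp add: Un_ac)

text \<open>The two conditional independences propagate to the smaller quantities below by the chain
  rule and nonnegativity of conditional mutual information.\<close>
lemma coord_cmi_independence_identity:
  assumes fin: "finite a" "finite b" "finite P" "finite F" "finite H"
    and indep_b: "coord_cmi (a \<union> (P \<union> F)) H b = 0"
    and indep_a: "coord_cmi P (b \<union> F) a = 0"
  shows "(coord_cmi P a (b \<union> (F \<union> H)) + (coord_cmi P a b - coord_cmi P a (F \<union> b)))
       - ((coord_cmi a b P - coord_cmi a b (F \<union> P)) + coord_cmi b F (a \<union> P))
     = coord_cond_entropy b (P \<union> F) - coord_cond_entropy a P + (coord_entropy a - coord_entropy b)"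
proof -
  have "0 \<le> coord_cmi F H b" "0 \<le> coord_cmi a H (b \<union> F)" "0 \<le> coord_cmi P H (a \<union> b \<union> F)"
    "0 \<le> coord_cmi a H (b \<union> F \<union> P)" "0 \<le> coord_cmi P H (b \<union> F)" "0 \<le> coord_cmi P b a"
    "0 \<le> coord_cmi P F (a \<union> b)"
    using fin by (simp_all add: coord_cmi_nonneg)
  then show ?thesis using indep_a indep_b
    unfolding coord_cmi_def coord_cond_entropy_def by (simp only: Un_ac)
qed

end

context stationary_process
begin

lemma identity_i:
  "lim (\<lambda>n. cond_entropy M (R 0) (\<lambda>\<omega>. (R (int k) \<omega>, window Y (- int n) (int n) \<omega>)))
   = lim (\<lambda>n. cond_entropy M (R (int k)) (\<lambda>\<omega>. (R 0 \<omega>, window Y (- int n) (int n) \<omega>)))"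
proof -
  have rewrite: "cond_entropy M (R s) (\<lambda>\<omega>. (R t \<omega>, window Y (- int n) (int n) \<omega>))
      = coord_cond_entropy {Inr s} ({Inr t} \<union> window_coords (- int n) (int n))" for s t n
    by (rule cond_entropy_encodes[OF encodes_R encodes_pair[OF encodes_R encodes_window]])
  have convergent: "convergent (\<lambda>n. cond_entropy M (R s) (\<lambda>\<omega>. (R t \<omega>, window Y (- int n) (int n) \<omega>)))"
    for s t
    unfolding rewrite by (rule convergent_coord_cond_entropy) auto
  define e where "e = (\<lambda>n. window_cond_entropy 0 (- int n) (int n) - window_cond_entropy (int k) (- int n) (int n))"
  have "e n = cond_entropy M (R 0) (\<lambda>\<omega>. (R (int k) \<omega>, window Y (- int n) (int n) \<omega>))
      - cond_entropy M (R (int k)) (\<lambda>\<omega>. (R 0 \<omega>, window Y (- int n) (int n) \<omega>))" for n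
    unfolding e_def rewrite window_cond_entropy_def coord_cond_entropy_def by (simp add: Un_ac insert_commute)
  moreover have "e \<longlonglongrightarrow> two_sided_limit - two_sided_limit"
    unfolding e_def
    by (intro tendsto_diff tendsto_window_cond_entropy_two_sided_0 tendsto_window_cond_entropy_two_sided)
  ultimately show ?thesis
    by (intro lim_eq_if_eventually_diff_eq[OF convergent convergent, of e]) simp_all
qed

end

context stationary_process
begin

lemma identity_ii:
  "lim (\<lambda>n. cond_mutual_info3 M (R 0) (R (int k)) (window Y 1 (int k)) (window Y (- int n) 0))
   + lim (\<lambda>n. cond_mutual_info M (R 0) (window Y 1 (int k)) (\<lambda>\<omega>. (window Y (- int n) 0 \<omega>, R (int k) \<omega>)))
   + lim (\<lambda>n. cond_mutual_info M (R 0) (window Y 1 (int n))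
               (\<lambda>\<omega>. (window Y (- int n) 0 \<omega>, window Y 1 (int k) \<omega>, R (int k) \<omega>)))
   = lim (\<lambda>n. cond_mutual_info M (R (int k)) (window Y 1 (int n))
               (\<lambda>\<omega>. (R 0 \<omega>, window Y (- int n) 0 \<omega>, window Y 1 (int k) \<omega>)))"
  (is "lim ?t1 + lim ?t2 + lim ?t3 = lim ?t4")
proof -
  define a b where "a = {Inr 0 :: int + int}" and "b = {Inr (int k) :: int + int}"
  define P G where "P n = window_coords (- int n) 0" and "G n = window_coords 1 (int n)" for n
  define F where "F = window_coords 1 (int k)"
  have enc_a: "encodes (R 0) a" and enc_b: "encodes (R (int k)) b"
    and enc_P: "encodes (window Y (- int n) 0) (P n)" and enc_G: "encodes (window Y 1 (int n)) (G n)"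
    and enc_F: "encodes (window Y 1 (int k)) F" for n
    by (simp_all add: a_def b_def P_def G_def F_def encodes_R encodes_window)
  have t1: "?t1 n = coord_cmi a b (P n) - coord_cmi a b (F \<union> P n)" for n
    unfolding cond_mutual_info3_def
    by (simp only: cond_mutual_info_encodes[OF enc_a enc_b enc_P]
        cond_mutual_info_encodes[OF enc_a enc_b encodes_pair[OF enc_F enc_P]])
  have t2: "?t2 n = coord_cmi a F (P n \<union> b)" for n
    by (rule cond_mutual_info_encodes[OF enc_a enc_F encodes_pair[OF enc_P enc_b]])
  have t3: "?t3 n = coord_cmi a (G n) (P n \<union> (F \<union> b))" for n
    by (rule cond_mutual_info_encodes[OF enc_a enc_G encodes_pair[OF enc_P encodes_pair[OF enc_F enc_b]]])
  have t4: "?t4 n = coord_cmi b (G n) (a \<union> (P n \<union> F))" for n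
    by (rule cond_mutual_info_encodes[OF enc_b enc_G encodes_pair[OF enc_a encodes_pair[OF enc_P enc_F]]])
  have mono: "P n \<subseteq> P (Suc n)" "G n \<subseteq> G (Suc n)" for n by (auto simp: P_def G_def)
  have fin: "finite a" "finite b" "finite (P n)" "finite (G n)" "finite F" for n
    by (simp_all add: a_def b_def P_def G_def F_def)
  have convergent: "convergent ?t1" "convergent ?t2" "convergent ?t3" "convergent ?t4"
    unfolding t1 t2 t3 t4
    by (intro convergent_diff convergent_coord_cmi; use fin mono in blast)+
  define err where "err = (\<lambda>n. (window_cond_entropy 0 (- int n) 0 - window_cond_entropy 0 (- int n) (int n))
      - (window_cond_entropy (int k) (- int n) (int k) - window_cond_entropy (int k) (- int n) (int n)))"
  have err_eq: "err n = ?t1 n + ?t2 n + ?t3 n - ?t4 n" if "k \<le> n" for n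
  proof -
    let ?H = "window_coords (int k + 1) (int n)"
    have windows: "G n = F \<union> ?H" "G n \<union> P n = window_coords (- int n) (int n)"
      "P n \<union> F = window_coords (- int n) (int k)" "?H \<union> window_coords (- int n) (int k) = window_coords (- int n) (int n)"
      using that window_coords_Un[of 1 "int k" "int n"] window_coords_Un[of "- int n" 0 "int n"]
        window_coords_Un[of "- int n" 0 "int k"] window_coords_Un[of "- int n" "int k" "int n"]
      by (simp_all add: P_def G_def F_def Un_commute)
    have "?t1 n + ?t2 n + ?t3 n - ?t4 n = coord_cmi a (G n) (P n) - coord_cmi b ?H (P n \<union> F)"
      using coord_cmi_chain_identity[of b F ?H a "P n"] unfolding t1 t2 t3 t4 windows(1) by linarith
    also have "\<dots> = err n"
      unfolding coord_cmi_eq_cond_entropy_diff err_def window_cond_entropy_def windows(2-4)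
      by (simp add: a_def b_def P_def)
    finally show ?thesis ..
  qed
  have err_tendsto: "err \<longlonglongrightarrow> (past_limit - two_sided_limit) - (past_limit - two_sided_limit)"
    unfolding err_def
    by (intro tendsto_diff tendsto_window_cond_entropy_past_0 tendsto_window_cond_entropy_two_sided_0
        tendsto_window_cond_entropy_past tendsto_window_cond_entropy_two_sided)
  have "lim (\<lambda>n. ?t1 n + ?t2 n + ?t3 n) = lim ?t4"
    by (rule lim_eq_if_eventually_diff_eq[where e=err and N=k])
      (use convergent err_tendsto err_eq in \<open>simp_all add: convergent_add\<close>)
  then show ?thesis
    using convergent by (simp add: lim_add convergent_add)
qed

end

locale stationary_generator = stationary_process M Y R + generator_process M Y R
  for M :: "'a measure" and Y :: "int \<Rightarrow> 'a \<Rightarrow> 'y::finite" and R :: "int \<Rightarrow> 'a \<Rightarrow> 'r::finite"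
begin

lemma identity_iii:
  assumes "1 \<le> k"
  shows "lim (\<lambda>n. cond_mutual_info M (window Y (- int n) 0) (R 0) (\<lambda>\<omega>. (R (int k) \<omega>, window Y 1 (int n) \<omega>)))
     + lim (\<lambda>n. cond_mutual_info3 M (window Y (- int n) 0) (R 0) (window Y 1 (int k)) (R (int k)))
   = lim (\<lambda>n. cond_mutual_info3 M (R 0) (R (int k)) (window Y 1 (int k)) (window Y (- int n) 0))
     + lim (\<lambda>n. cond_mutual_info M (R (int k)) (window Y 1 (int k)) (\<lambda>\<omega>. (R 0 \<omega>, window Y (- int n) 0 \<omega>)))"
  (is "lim ?s1 + lim ?s2 = lim ?t1 + lim ?t2")
proof -
  define a b where "a = {Inr 0 :: int + int}" and "b = {Inr (int k) :: int + int}"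
  define P G where "P n = window_coords (- int n) 0" and "G n = window_coords 1 (int n)" for n
  define F where "F = window_coords 1 (int k)"
  have enc_a: "encodes (R 0) a" and enc_b: "encodes (R (int k)) b"
    and enc_P: "encodes (window Y (- int n) 0) (P n)" and enc_G: "encodes (window Y 1 (int n)) (G n)"
    and enc_F: "encodes (window Y 1 (int k)) F" for n
    by (simp_all add: a_def b_def P_def G_def F_def encodes_R encodes_window)
  have s1: "?s1 n = coord_cmi (P n) a (b \<union> G n)" for n
    by (rule cond_mutual_info_encodes[OF enc_P enc_a encodes_pair[OF enc_b enc_G]])
  have s2: "?s2 n = coord_cmi (P n) a b - coord_cmi (P n) a (F \<union> b)" for n
    unfolding cond_mutual_info3_def
    by (simp only: cond_mutual_info_encodes[OF enc_P enc_a enc_b]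
        cond_mutual_info_encodes[OF enc_P enc_a encodes_pair[OF enc_F enc_b]])
  have t1: "?t1 n = coord_cmi a b (P n) - coord_cmi a b (F \<union> P n)" for n
    unfolding cond_mutual_info3_def
    by (simp only: cond_mutual_info_encodes[OF enc_a enc_b enc_P]
        cond_mutual_info_encodes[OF enc_a enc_b encodes_pair[OF enc_F enc_P]])
  have t2: "?t2 n = coord_cmi b F (a \<union> P n)" for n
    by (rule cond_mutual_info_encodes[OF enc_b enc_F encodes_pair[OF enc_a enc_P]])
  have mono: "P n \<subseteq> P (Suc n)" "G n \<subseteq> G (Suc n)" for n by (auto simp: P_def G_def)
  have fin: "finite a" "finite b" "finite (P n)" "finite (G n)" "finite F" for n
    by (simp_all add: a_def b_def P_def G_def F_def)
  have swap: "coord_cmi (P n) a C = coord_cmi a (P n) C" for n C by (rule coord_cmi_commute)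
  have convergent: "convergent ?s1" "convergent ?s2" "convergent ?t1" "convergent ?t2"
    unfolding s1 s2 t1 t2 swap
    by (intro convergent_diff convergent_coord_cmi; use fin mono in blast)+
  define err where "err = (\<lambda>n. window_cond_entropy 0 (- int n) 0 - window_cond_entropy (int k) (- int n) (int k))"
  have err_eq: "err n = ?t1 n + ?t2 n - (?s1 n + ?s2 n)" if "k \<le> n" for n
  proof -
    let ?H = "window_coords (int k + 1) (int n)"
    have windows: "G n = F \<union> ?H" "P n \<union> F = window_coords (- int n) (int k)"
      using that window_coords_Un[of 1 "int k" "int n"] window_coords_Un[of "- int n" 0 "int k"]
      by (simp_all add: P_def G_def F_def)
    have "coord_cmi (a \<union> (P n \<union> F)) ?H b = 0"
      unfolding b_def using \<open>1 \<le> k\<close>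
      by (intro coord_cmi_generator) (auto simp: a_def P_def F_def past_coords_def future_coords_def)
    moreover have "coord_cmi (P n) (b \<union> F) a = 0"
      unfolding a_def using \<open>1 \<le> k\<close>
      by (intro coord_cmi_generator) (auto simp: b_def P_def F_def past_coords_def future_coords_def)
    ultimately have "?s1 n + ?s2 n - (?t1 n + ?t2 n)
        = coord_cond_entropy b (P n \<union> F) - coord_cond_entropy a (P n) + (coord_entropy a - coord_entropy b)"
      using coord_cmi_independence_identity[of a b "P n" F ?H] fin unfolding s1 s2 t1 t2 windows(1) by simp
    moreover have "coord_cond_entropy b (P n \<union> F) = window_cond_entropy (int k) (- int n) (int k)"
      "coord_cond_entropy a (P n) = window_cond_entropy 0 (- int n) 0"
      unfolding windows(2) by (simp_all add: window_cond_entropy_def a_def b_def P_def)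
    moreover have "coord_entropy a = coord_entropy b"
      using coord_entropy_R_shift[of 0 k] by (simp add: a_def b_def)
    ultimately show ?thesis unfolding err_def by linarith
  qed
  have err_tendsto: "err \<longlonglongrightarrow> past_limit - past_limit"
    unfolding err_def by (intro tendsto_diff tendsto_window_cond_entropy_past_0 tendsto_window_cond_entropy_past)
  have "lim (\<lambda>n. ?t1 n + ?t2 n) = lim (\<lambda>n. ?s1 n + ?s2 n)"
    by (rule lim_eq_if_eventually_diff_eq[where e=err and N=k])
      (use convergent err_tendsto err_eq in \<open>simp_all add: convergent_add\<close>)
  then show ?thesis
    using convergent by (simp add: lim_add)
qed

end

theorem mainTheorem7:
  fixes M :: "'a measure"
    and Y :: "int \<Rightarrow> 'a \<Rightarrow> 'y::finite"
    and R :: "int \<Rightarrow> 'a \<Rightarrow> 'r::finite"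
    and k :: nat
  assumes "prob_space M"
    and "\<And>t. Y t \<in> measurable M (count_space UNIV)"
    and "\<And>t. R t \<in> measurable M (count_space UNIV)"
    and "jointly_stationary M Y R"
    and "generator_condition M Y R"
    and "k \<ge> 1"
  shows
    "(lim (\<lambda>n. cond_entropy M (R 0) (\<lambda>\<omega>. (R (int k) \<omega>, window Y (- int n) (int n) \<omega>)))
       = lim (\<lambda>n. cond_entropy M (R (int k)) (\<lambda>\<omega>. (R 0 \<omega>, window Y (- int n) (int n) \<omega>))))
    \<and>
    (lim (\<lambda>n. cond_mutual_info3 M (R 0) (R (int k)) (window Y 1 (int k)) (window Y (- int n) 0))
     + lim (\<lambda>n. cond_mutual_info M (R 0) (window Y 1 (int k))
                 (\<lambda>\<omega>. (window Y (- int n) 0 \<omega>, R (int k) \<omega>)))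
     + lim (\<lambda>n. cond_mutual_info M (R 0) (window Y 1 (int n))
                 (\<lambda>\<omega>. (window Y (- int n) 0 \<omega>, window Y 1 (int k) \<omega>, R (int k) \<omega>)))
       = lim (\<lambda>n. cond_mutual_info M (R (int k)) (window Y 1 (int n))
                 (\<lambda>\<omega>. (R 0 \<omega>, window Y (- int n) 0 \<omega>, window Y 1 (int k) \<omega>))))
    \<and>
    (lim (\<lambda>n. cond_mutual_info M (window Y (- int n) 0) (R 0)
                 (\<lambda>\<omega>. (R (int k) \<omega>, window Y 1 (int n) \<omega>)))
     + lim (\<lambda>n. cond_mutual_info3 M (window Y (- int n) 0) (R 0) (window Y 1 (int k)) (R (int k)))
       = lim (\<lambda>n. cond_mutual_info3 M (R 0) (R (int k)) (window Y 1 (int k)) (window Y (- int n) 0))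
       + lim (\<lambda>n. cond_mutual_info M (R (int k)) (window Y 1 (int k))
                 (\<lambda>\<omega>. (R 0 \<omega>, window Y (- int n) 0 \<omega>))))"
proof -
  interpret stationary_generator M Y R
    using assms(1-5)
    by (simp add: stationary_generator_def stationary_process_def stationary_process_axioms_def
        generator_process_def generator_process_axioms_def finite_process_def finite_process_axioms_def)
  show ?thesis
    using identity_i identity_ii identity_iii[OF assms(6)] by blast
qed

end
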